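(* Let $(\Omega,\mathcal F,\mathbb P)$ be a probability space carrying a group of measurable bijections $\{\theta_n\}_{n\in\mathbb Z}$ ($\theta_n\circ\theta_m=\theta_{n+m}$), each preserving $\mathbb P$. Let $\{a_n\}_{n\in\mathbb Z}$ be i.i.d. random variables with values in $\{1,2,3,\dots\}$, compatible with the flow ($a_n(\omega)=a_0(\theta_n\omega)$), with $\mathbb E[a_0]<\infty$ and $\mathbb P[a_0=1]>0$. Put $f(n)=n+a_n$ and $$N_n=\#\{m\in\mathbb Z:\ m<n,\ f(m)>n\}+1,\qquad n\in\mathbb Z.$$ Let $\Psi^o=\{m\in\mathbb Z: N_m=1\}$. Then $\Psi^o$ is an integer-valued renewal process whose intensity satisfies $$\lambda^o:=\mathbb P[0\in\Psi^o]=\prod_{i=1}^{\infty}\mathbb P[a_0\le i]>0.$$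
   Context: A simple stationary point process (s.s.p.p.) on $\mathbb Z$ is a random subset $\Phi\subset\mathbb Z$ such that the indicator process $U_n=\mathbf 1\{n\in\Phi\}$ is compatible with the flow ($U_n(\omega)=U_0(\theta_n\omega)$) and $\Phi$ is a.s. nonempty. Its points are enumerated as $\cdots<k_{-1}<k_0\le 0<k_1<k_2<\cdots$. Its intensity is $\lambda_\Phi=\mathbb P[0\in\Phi]$, and when $\lambda_\Phi>0$ its Palm probability is $\mathbb P_\Phi[\cdot]=\mathbb P[\cdot\mid 0\in\Phi]$. An s.s.p.p. $\Psi$ is an integer-valued renewal process if $\{k_n-k_{n-1}\}_{n\in\mathbb Z}$ is i.i.d. under $\mathbb P_\Psi$. $N_n$ is interpreted as the number of individuals alive at time $n$ when individual $m$ lives during $[m,m+a_m)$. *)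

theory Defs
  imports "HOL-Probability.Probability"
begin

definition is_flow :: "'a measure \<Rightarrow> (int \<Rightarrow> 'a \<Rightarrow> 'a) \<Rightarrow> bool" where
  "is_flow M \<theta> \<longleftrightarrow>
     (\<forall>n. \<theta> n \<in> M \<rightarrow>\<^sub>M M) \<and>
     (\<forall>n. bij_betw (\<theta> n) (space M) (space M)) \<and>
     (\<forall>n m. \<forall>\<omega>\<in>space M. \<theta> n (\<theta> m \<omega>) = \<theta> (n + m) \<omega>) \<and>
     (\<forall>n. distr M M (\<theta> n) = M)"

definition sspp :: "'a measure \<Rightarrow> (int \<Rightarrow> 'a \<Rightarrow> 'a) \<Rightarrow> ('a \<Rightarrow> int set) \<Rightarrow> bool" where
  "sspp M \<theta> \<Phi> \<longleftrightarrow>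
     (\<forall>n. {\<omega> \<in> space M. n \<in> \<Phi> \<omega>} \<in> sets M) \<and>
     (\<forall>\<omega>\<in>space M. \<forall>n. (n \<in> \<Phi> \<omega>) = (0 \<in> \<Phi> (\<theta> n \<omega>))) \<and>
     (AE \<omega> in M. \<Phi> \<omega> \<noteq> {})"

definition intensity :: "'a measure \<Rightarrow> ('a \<Rightarrow> int set) \<Rightarrow> real" where
  "intensity M \<Phi> = measure M {\<omega> \<in> space M. 0 \<in> \<Phi> \<omega>}"

definition palm :: "'a measure \<Rightarrow> ('a \<Rightarrow> int set) \<Rightarrow> 'a measure" where
  "palm M \<Phi> = uniform_measure M {\<omega> \<in> space M. 0 \<in> \<Phi> \<omega>}"

text \<open>Enumeration of the points ... < k(-1) < k 0 <= 0 < k 1 < ... of a set of integers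
  (defined when such an enumeration exists, i.e. the set is unbounded in both directions;
  otherwise a dummy value 0).\<close>
definition enum_points :: "int set \<Rightarrow> int \<Rightarrow> int" where
  "enum_points S =
     (if \<exists>k::int \<Rightarrow> int. strict_mono k \<and> range k = S \<and> k 0 \<le> 0 \<and> 0 < k 1
      then (THE k::int \<Rightarrow> int. strict_mono k \<and> range k = S \<and> k 0 \<le> 0 \<and> 0 < k 1)
      else (\<lambda>_. 0))"

definition renewal_pp :: "'a measure \<Rightarrow> (int \<Rightarrow> 'a \<Rightarrow> 'a) \<Rightarrow> ('a \<Rightarrow> int set) \<Rightarrow> bool" where
  "renewal_pp M \<theta> \<Psi> \<longleftrightarrow>
     sspp M \<theta> \<Psi> \<and> intensity M \<Psi> > 0 \<and>
     (let P = palm M \<Psi>;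
          D = (\<lambda>n \<omega>. enum_points (\<Psi> \<omega>) n - enum_points (\<Psi> \<omega>) (n - 1))
      in prob_space.indep_vars P (\<lambda>_. count_space UNIV) D UNIV \<and>
         (\<forall>n. distr P (count_space UNIV) (D n) = distr P (count_space UNIV) (D 0)))"

text \<open>Number of individuals alive at time n (individual m lives during [m, m + a m)).\<close>
definition alive_count :: "(int \<Rightarrow> 'a \<Rightarrow> nat) \<Rightarrow> int \<Rightarrow> 'a \<Rightarrow> nat" where
  "alive_count a n \<omega> = card {m. m < n \<and> m + int (a m \<omega>) > n} + 1"

end

theory Submission
  imports Defs
begin

text \<open>
  Call n a renewal time if every individual born before n has died by n. Then N n = 1, and
  conversely N n = 1 forces a renewal time unless infinitely many individuals are alive at n, which
  Borel-Cantelli excludes because \<open>\<Sum>i. P[a 0 > i] \<le> E[a 0] < \<infinity>\<close>. Time 0 is a renewal time iff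
  \<open>a (-1-i) \<le> i+1\<close> for all i, so by independence its probability is \<open>\<Prod>i. P[a 0 \<le> i+1]\<close>,
  which is positive because P[a 0 = 1] > 0 and these tail probabilities are summable.

  The stretch between two consecutive renewal times is determined by the lifetimes of the
  individuals born in it. Hence the probability that 0 is a renewal time and the gaps to its
  neighbours take given values factorises into the intensity times one factor per gap, the
  probability of a single cycle of that length. Renewals recur almost surely in both directions
  (Poincare recurrence), so summing out one gap shows that the cycle probabilities add up to 1;
  conditioned on 0 being a point, the gaps are therefore i.i.d.
\<close>

section \<open>Renewal times of a lifetime sequence\<close>

definition renewal_time :: "(int \<Rightarrow> nat) \<Rightarrow> int \<Rightarrow> bool" where
  "renewal_time x n \<longleftrightarrow> (\<forall>m<n. m + int (x m) \<le> n)"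

definition alive_set :: "(int \<Rightarrow> nat) \<Rightarrow> int \<Rightarrow> int set" where
  "alive_set x n = {m. m < n \<and> n < m + int (x m)}"

text \<open>The stretch [u, v) between consecutive renewal times, described by the lifetimes of those
  born in it only (see \<open>renewal_cycle_iff\<close>).\<close>
definition renewal_cycle :: "(int \<Rightarrow> nat) \<Rightarrow> int \<Rightarrow> int \<Rightarrow> bool" where
  "renewal_cycle x u v \<longleftrightarrow> u < v \<and> (\<forall>m. u \<le> m \<and> m < v \<longrightarrow> m + int (x m) \<le> v) \<and>
     (\<forall>w. u < w \<and> w < v \<longrightarrow> (\<exists>m. u \<le> m \<and> m < w \<and> w < m + int (x m)))"

definition consecutive_in :: "int set \<Rightarrow> int \<Rightarrow> int \<Rightarrow> bool" where
  "consecutive_in S u v \<longleftrightarrow> u \<in> S \<and> v \<in> S \<and> u < v \<and> (\<forall>w. u < w \<and> w < v \<longrightarrow> w \<notin> S)"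

lemma alive_set_empty_iff: "alive_set x n = {} \<longleftrightarrow> renewal_time x n"
  unfolding alive_set_def renewal_time_def by (auto simp: not_less) (meson not_le)

lemma alive_set_eq_image:
  "alive_set x n = (\<lambda>i::nat. n - 1 - int i) ` {i. Suc i < x (n - 1 - int i)}"
proof (intro set_eqI iffI)
  fix m assume "m \<in> alive_set x n"
  then show "m \<in> (\<lambda>i::nat. n - 1 - int i) ` {i. Suc i < x (n - 1 - int i)}"
    by (intro image_eqI[of _ _ "nat (n - 1 - m)"]) (auto simp: alive_set_def)
qed (auto simp: alive_set_def)

lemma finite_alive_set_iff: "finite (alive_set x n) \<longleftrightarrow> finite {i. Suc i < x (n - 1 - int i)}"
  unfolding alive_set_eq_image by (rule finite_image_iff) (auto simp: inj_on_def)

lemma renewal_time_iff_lifetimes: "renewal_time x n \<longleftrightarrow> (\<forall>i::nat. x (n - 1 - int i) \<le> Suc i)"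
  unfolding alive_set_empty_iff[symmetric] alive_set_eq_image by (auto simp: not_less)

text \<open>The second disjunct comes from \<open>card\<close> being 0 on infinite sets; it is excluded almost
  surely by \<open>AE_finite_alive_set\<close>.\<close>
lemma alive_count_eq_1_iff:
  "alive_count a n \<omega> = 1 \<longleftrightarrow> renewal_time (\<lambda>m. a m \<omega>) n \<or> infinite (alive_set (\<lambda>m. a m \<omega>) n)"
  unfolding alive_count_def alive_set_empty_iff[symmetric] alive_set_def by (auto simp: card_eq_0_iff)

lemma alive_set_shift: "alive_set (\<lambda>m. x (m + N)) n = (\<lambda>m. m - N) ` alive_set x (n + N)"
proof (intro set_eqI iffI)
  fix m assume "m \<in> alive_set (\<lambda>m. x (m + N)) n"
  then show "m \<in> (\<lambda>m. m - N) ` alive_set x (n + N)"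
    by (intro image_eqI[of _ _ "m + N"]) (auto simp: alive_set_def)
qed (auto simp: alive_set_def)

lemma card_alive_set_shift: "card (alive_set (\<lambda>m. x (m + N)) n) = card (alive_set x (n + N))"
  unfolding alive_set_shift by (rule card_image) (simp add: inj_on_def)

lemma renewal_time_shift: "renewal_time (\<lambda>m. x (m + N)) n \<longleftrightarrow> renewal_time x (n + N)"
  unfolding renewal_time_def
proof (intro iffI allI impI)
  fix m assume "\<forall>m<n. m + int (x (m + N)) \<le> n" "m < n + N"
  then show "m + int (x m) \<le> n + N" by (auto dest: spec[of _ "m - N"])
next
  fix m assume "\<forall>m<n + N. m + int (x m) \<le> n + N" "m < n"
  then show "m + int (x (m + N)) \<le> n" by (auto dest: spec[of _ "m + N"])
qed

lemma renewal_cycle_shift: "renewal_cycle (\<lambda>m. x (m + N)) u v \<longleftrightarrow> renewal_cycle x (u + N) (v + N)"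
  unfolding renewal_cycle_def
proof (intro conj_cong iffI allI impI)
  fix m assume "\<forall>m. u \<le> m \<and> m < v \<longrightarrow> m + int (x (m + N)) \<le> v" "u + N \<le> m \<and> m < v + N"
  then show "m + int (x m) \<le> v + N" by (auto dest: spec[of _ "m - N"])
next
  fix w assume "\<forall>w. u < w \<and> w < v \<longrightarrow> (\<exists>m\<ge>u. m < w \<and> w < m + int (x (m + N)))" "u + N < w \<and> w < v + N"
  then obtain m where "u \<le> m" "m < w - N" "w - N < m + int (x (m + N))" by (auto dest: spec[of _ "w - N"])
  then show "\<exists>m\<ge>u + N. m < w \<and> w < m + int (x m)" by (intro exI[of _ "m + N"]) auto
next
  fix w assume "\<forall>w. u + N < w \<and> w < v + N \<longrightarrow> (\<exists>m\<ge>u + N. m < w \<and> w < m + int (x m))" "u < w \<and> w < v"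
  then obtain m where "u + N \<le> m" "m < w + N" "w + N < m + int (x m)" by (auto dest: spec[of _ "w + N"])
  then show "\<exists>m\<ge>u. m < w \<and> w < m + int (x (m + N))" by (intro exI[of _ "m - N"]) auto
next
  fix m assume "\<forall>m. u + N \<le> m \<and> m < v + N \<longrightarrow> m + int (x m) \<le> v + N" "u \<le> m \<and> m < v"
  then show "m + int (x (m + N)) \<le> v" by (auto dest: spec[of _ "m + N"])
qed auto

lemma renewal_time_cong: "(\<And>m. m < n \<Longrightarrow> x m = y m) \<Longrightarrow> renewal_time x n \<longleftrightarrow> renewal_time y n"
  unfolding renewal_time_def by auto

lemma renewal_cycle_cong:
  "(\<And>m. u \<le> m \<Longrightarrow> m < v \<Longrightarrow> x m = y m) \<Longrightarrow> renewal_cycle x u v \<longleftrightarrow> renewal_cycle y u v"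
  unfolding renewal_cycle_def by (intro conj_cong refl all_cong imp_cong ex_cong) auto


lemma no_renewal_below_cong:
  assumes "\<And>m. m < c \<Longrightarrow> x m = y m"
  shows "(\<exists>N. \<forall>n\<le>N. \<not> renewal_time x n) \<longleftrightarrow> (\<exists>N. \<forall>n\<le>N. \<not> renewal_time y n)"
proof -
  have "(\<exists>N. \<forall>n\<le>N. \<not> renewal_time z n) \<longleftrightarrow> (\<exists>N\<le>c. \<forall>n\<le>N. \<not> renewal_time z n)" for z
  proof
    assume "\<exists>N. \<forall>n\<le>N. \<not> renewal_time z n"
    then obtain N where "\<forall>n\<le>N. \<not> renewal_time z n" by blast
    then show "\<exists>N\<le>c. \<forall>n\<le>N. \<not> renewal_time z n" by (intro exI[of _ "min N c"]) auto
  qed blast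
  moreover have "(\<forall>n\<le>N. \<not> renewal_time x n) \<longleftrightarrow> (\<forall>n\<le>N. \<not> renewal_time y n)" if "N \<le> c" for N
    using renewal_time_cong[of _ x y] assms that by (metis order.strict_trans2)
  ultimately show ?thesis by (simp only:) (intro ex_cong conj_cong refl)
qed

lemma renewal_cycle_iff:
  assumes u: "renewal_time x u"
  shows "renewal_cycle x u v \<longleftrightarrow> consecutive_in {n. renewal_time x n} u v"
proof
  assume cyc: "renewal_cycle x u v"
  have "renewal_time x v"
    unfolding renewal_time_def
  proof (intro allI impI)
    fix m assume "m < v"
    then show "m + int (x m) \<le> v"
      using u cyc unfolding renewal_time_def renewal_cycle_def by (cases "m < u") force+
  qed
  moreover have "\<not> renewal_time x w" if "u < w" "w < v" for w
    using cyc that unfolding renewal_cycle_def renewal_time_def by force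
  ultimately show "consecutive_in {n. renewal_time x n} u v"
    using u cyc unfolding consecutive_in_def renewal_cycle_def by blast
next
  assume "consecutive_in {n. renewal_time x n} u v"
  then have v: "renewal_time x v" and uv: "u < v" and gap: "\<And>w. u < w \<Longrightarrow> w < v \<Longrightarrow> \<not> renewal_time x w"
    unfolding consecutive_in_def by auto
  have "\<exists>m. u \<le> m \<and> m < w \<and> w < m + int (x m)" if uw: "u < w" "w < v" for w
  proof -
    obtain m where "m < w" "w < m + int (x m)"
      using gap[OF uw] unfolding renewal_time_def by (auto simp: not_le)
    moreover have "u \<le> m"
    proof (rule ccontr)
      assume "\<not> u \<le> m"
      then have "m + int (x m) \<le> u" using u unfolding renewal_time_def by simp
      then show False using uw calculation by simp
    qed
    ultimately show ?thesis by blast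
  qed
  then show "renewal_cycle x u v"
    using v uv unfolding renewal_cycle_def renewal_time_def by auto
qed

lemma renewal_cycle_unique: "renewal_cycle x u v \<Longrightarrow> renewal_cycle x u v' \<Longrightarrow> v = v'"
proof (induction v v' rule: linorder_wlog)
  case (le v v')
  show ?case
  proof (rule ccontr)
    assume "v \<noteq> v'"
    then obtain m where "u \<le> m" "m < v" "v < m + int (x m)"
      using le unfolding renewal_cycle_def by force
    then show False using le(2) unfolding renewal_cycle_def by force
  qed
qed (simp add: eq_commute)

section \<open>Enumerating the points of an integer set\<close>

lemma int_interval_induct:
  fixes lo hi b j :: int
  assumes "lo \<le> j" "j \<le> hi" and "lo \<le> b" "b \<le> hi" "P b"
    and up: "\<And>i. b \<le> i \<Longrightarrow> i < hi \<Longrightarrow> P i \<Longrightarrow> P (i + 1)"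
    and down: "\<And>i. lo < i \<Longrightarrow> i \<le> b \<Longrightarrow> P i \<Longrightarrow> P (i - 1)"
  shows "P j"
proof (cases "b \<le> j")
  case True
  have "j \<le> hi \<longrightarrow> P j"
    using True by (induction j rule: int_ge_induct) (use assms in auto)
  then show ?thesis using assms(2) by blast
next
  case False
  then have "j \<le> b" by simp
  then have "lo \<le> j \<longrightarrow> P j"
    by (induction j rule: int_le_induct) (use assms in auto)
  then show ?thesis using assms(1) by blast
qed

lemma consecutive_in_unique_right: "consecutive_in S u v \<Longrightarrow> consecutive_in S u v' \<Longrightarrow> v = v'"
  unfolding consecutive_in_def by (meson linorder_neqE)

lemma consecutive_in_unique_left: "consecutive_in S u v \<Longrightarrow> consecutive_in S u' v \<Longrightarrow> u = u'"
  unfolding consecutive_in_def by (meson linorder_neqE)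

lemma consecutive_chains_agree:
  fixes f g :: "int \<Rightarrow> int"
  assumes f: "\<And>i. lo \<le> i \<Longrightarrow> i \<le> hi \<Longrightarrow> consecutive_in S (f (i - 1)) (f i)"
    and g: "\<And>i. lo \<le> i \<Longrightarrow> i \<le> hi \<Longrightarrow> consecutive_in S (g (i - 1)) (g i)"
    and "lo - 1 \<le> j" "j \<le> hi" "lo - 1 \<le> b" "b \<le> hi" "f b = g b"
  shows "f j = g j"
proof (rule int_interval_induct[where P = "\<lambda>j. f j = g j", OF assms(3-7)])
  fix i assume "b \<le> i" "i < hi" "f i = g i"
  then show "f (i + 1) = g (i + 1)"
    using f[of "i + 1"] g[of "i + 1"] assms(5) consecutive_in_unique_right by simp
next
  fix i assume "lo - 1 < i" "i \<le> b" "f i = g i"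
  then show "f (i - 1) = g (i - 1)"
    using f[of i] g[of i] assms(6) consecutive_in_unique_left by simp
qed

lemma differences_determine:
  fixes f g :: "int \<Rightarrow> int"
  assumes diff: "\<And>i. lo \<le> i \<Longrightarrow> i \<le> hi \<Longrightarrow> f i - f (i - 1) = g i - g (i - 1)"
    and "lo - 1 \<le> j" "j \<le> hi" "lo - 1 \<le> b" "b \<le> hi" "f b = g b"
  shows "f j = g j"
proof (rule int_interval_induct[where P = "\<lambda>j. f j = g j", OF assms(2-6)])
  fix i assume "b \<le> i" "i < hi" "f i = g i"
  then show "f (i + 1) = g (i + 1)" using diff[of "i + 1"] assms(4) by simp
next
  fix i assume "lo - 1 < i" "i \<le> b" "f i = g i"
  then show "f (i - 1) = g (i - 1)" using diff[of i] assms(5) by simp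
qed

lemma ex_antidifference: "\<exists>t :: int \<Rightarrow> int. t 0 = 0 \<and> (\<forall>j. t j - t (j - 1) = d j)"
proof -
  define t where "t j = (if 0 \<le> j then \<Sum>i<nat j. d (int i + 1) else - (\<Sum>i<nat (- j). d (- int i)))" for j
  have "t j - t (j - 1) = d j" for j
  proof (cases "1 \<le> j")
    case True
    then have "nat j = Suc (nat (j - 1))" by simp
    then show ?thesis unfolding t_def using True by simp
  next
    case False
    then have "nat (- (j - 1)) = Suc (nat (- j))" by simp
    then show ?thesis unfolding t_def using False by simp
  qed
  then show ?thesis by (intro exI[of _ t]) (simp add: t_def)
qed

definition enumerates :: "(int \<Rightarrow> int) \<Rightarrow> int set \<Rightarrow> bool" where
  "enumerates k S \<longleftrightarrow> strict_mono k \<and> range k = S \<and> k 0 \<le> 0 \<and> 0 < k 1"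

lemma enumerates_consecutive:
  assumes "enumerates k S"
  shows "consecutive_in S (k (j - 1)) (k j)"
proof -
  have sm: "strict_mono k" and S: "S = range k" using assms unfolding enumerates_def by auto
  have "w \<notin> S" if "k (j - 1) < w" "w < k j" for w
  proof
    assume "w \<in> S"
    then obtain i where "w = k i" using S by blast
    then have "j - 1 < i" "i < j" using that sm strict_mono_less by blast+
    then show False by simp
  qed
  then show ?thesis unfolding consecutive_in_def S using sm by (simp add: strict_mono_less)
qed

lemma enumerates_0_greatest:
  assumes "enumerates k S" "s \<in> S" "s \<le> 0"
  shows "s \<le> k 0"
proof -
  have sm: "strict_mono k" and "k 0 \<le> 0" "0 < k 1" and S: "S = range k"
    using assms(1) unfolding enumerates_def by auto
  obtain i where i: "s = k i" using assms(2) S by blast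
  then have "\<not> 1 \<le> i" using assms(3) \<open>0 < k 1\<close> sm strict_mono_less_eq[of k 1 i] by linarith
  then show ?thesis using i sm strict_mono_less_eq[of k i 0] by simp
qed

lemma enumerates_unique: "enumerates k S \<Longrightarrow> enumerates k' S \<Longrightarrow> k = k'"
proof
  fix j assume k: "enumerates k S" and k': "enumerates k' S"
  have "k' 0 \<in> S" "k 0 \<in> S" "k 0 \<le> 0" "k' 0 \<le> 0" using k k' unfolding enumerates_def by auto
  then have "k 0 = k' 0"
    using enumerates_0_greatest[OF k, of "k' 0"] enumerates_0_greatest[OF k', of "k 0"] by simp
  then show "k j = k' j"
    using enumerates_consecutive[OF k] enumerates_consecutive[OF k']
    by (intro consecutive_chains_agree[of "min 0 j" "max 0 j" S k k' j 0]) auto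
qed

lemma enum_points_eqI: "enumerates k S \<Longrightarrow> enum_points S = k"
  unfolding enum_points_def enumerates_def[symmetric]
  by (auto intro: enumerates_unique)

lemma enumerates_enum_points: "\<exists>k. enumerates k S \<Longrightarrow> enumerates (enum_points S) S"
  using enum_points_eqI by blast

lemma enum_points_default: "\<nexists>k. enumerates k S \<Longrightarrow> enum_points S = (\<lambda>_. 0)"
  unfolding enum_points_def enumerates_def by auto

lemma strict_mono_int_ge:
  assumes "strict_mono (k :: int \<Rightarrow> int)" "i \<le> j"
  shows "k i + (j - i) \<le> k j"
  using assms(2)
proof (induction j rule: int_ge_induct)
  case (step j)
  then show ?case using strict_monoD[OF assms(1), of j "j + 1"] by simp
qed simp

lemma enumerate_int_bounded_below:
  fixes T :: "int set"
  assumes "infinite T" "\<And>s. s \<in> T \<Longrightarrow> c \<le> s"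
  obtains e :: "nat \<Rightarrow> int" where "strict_mono e" "range e = T"
proof
  define U where "U = (\<lambda>s. nat (s - c)) ` T"
  have "inj_on (\<lambda>s. nat (s - c)) T" using assms(2) unfolding inj_on_def by (smt (verit) eq_nat_nat_iff)
  then have U: "infinite U" using assms(1) unfolding U_def by (simp add: finite_image_iff)
  show "strict_mono (\<lambda>i. c + int (enumerate U i))"
    using enumerate_mono[OF _ U] by (auto simp: strict_mono_def)
  have "range (enumerate U) = U" using bij_betw_imp_surj_on[OF bij_enumerate[OF U]] .
  then have "range (\<lambda>i. c + int (enumerate U i)) = (\<lambda>s. c + int (nat (s - c))) ` T"
    unfolding U_def by (metis image_image)
  also have "\<dots> = T" using assms(2) by (simp cong: image_cong)
  finally show "range (\<lambda>i. c + int (enumerate U i)) = T" .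
qed

lemma enumerate_int_above:
  fixes T :: "int set"
  assumes "\<forall>N. \<exists>s\<in>T. N \<le> s"
  obtains e :: "nat \<Rightarrow> int" where "strict_mono e" "range e = {s\<in>T. c < s}"
proof (rule enumerate_int_bounded_below[where c = c])
  show "infinite {s\<in>T. c < s}"
  proof
    assume "finite {s\<in>T. c < s}"
    then have fin: "finite (insert (c + 1) {s\<in>T. c < s})" by simp
    obtain s where s: "s \<in> T" "Max (insert (c + 1) {s\<in>T. c < s}) + 1 \<le> s" using assms by blast
    have "c + 1 \<le> Max (insert (c + 1) {s\<in>T. c < s})" by (rule Max_ge[OF fin]) simp
    then have "s \<le> Max (insert (c + 1) {s\<in>T. c < s})" using s by (intro Max_ge[OF fin]) simp
    then show False using s by simp
  qed
qed auto

lemma unbounded_if_enumerates: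
  assumes "enumerates k S"
  shows "(\<forall>N. \<exists>s\<in>S. N \<le> s) \<and> (\<forall>N. \<exists>s\<in>S. s \<le> N)"
proof -
  have sm: "strict_mono k" and S: "S = range k" using assms unfolding enumerates_def by auto
  have "N \<le> k (max 0 (N - k 0))" "k (min 0 (N - k 0)) \<le> N" for N
    using strict_mono_int_ge[OF sm, of 0 "max 0 (N - k 0)"] strict_mono_int_ge[OF sm, of "min 0 (N - k 0)" 0]
    by linarith+
  then show ?thesis unfolding S by blast
qed

lemma strict_mono_glue:
  fixes p n :: "nat \<Rightarrow> int"
  assumes "strict_mono p" "strict_mono n" "\<And>i. 0 < p i" "\<And>i. 0 \<le> n i"
  shows "strict_mono (\<lambda>j. if 0 < j then p (nat (j - 1)) else - n (nat (- j)))"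
proof (rule strict_monoI)
  fix i j :: int assume "i < j"
  then consider "0 < i" | "i \<le> 0" "0 < j" | "j \<le> 0" by linarith
  then show "(if 0 < i then p (nat (i - 1)) else - n (nat (- i))) < (if 0 < j then p (nat (j - 1)) else - n (nat (- j)))"
  proof cases
    case 1
    then show ?thesis using \<open>i < j\<close> strict_monoD[OF assms(1), of "nat (i - 1)" "nat (j - 1)"] by simp
  next
    case 2
    then show ?thesis using assms(3)[of "nat (j - 1)"] assms(4)[of "nat (- i)"] by simp
  next
    case 3
    then show ?thesis using \<open>i < j\<close> strict_monoD[OF assms(2), of "nat (- j)" "nat (- i)"] by simp
  qed
qed

lemma enumerates_if_unbounded:
  assumes "\<forall>N. \<exists>s\<in>S. N \<le> s" "\<forall>N. \<exists>s\<in>S. s \<le> N"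
  shows "\<exists>k. enumerates k S"
proof -
  obtain p :: "nat \<Rightarrow> int" where p: "strict_mono p" "range p = {s\<in>S. 0 < s}"
    using enumerate_int_above[OF assms(1)] by blast
  have "\<forall>N. \<exists>s\<in>uminus ` S. N \<le> s"
  proof
    fix N
    obtain s where "s \<in> S" "s \<le> - N" using assms(2) by blast
    then show "\<exists>s\<in>uminus ` S. N \<le> s" by (intro bexI[of _ "- s"]) auto
  qed
  then obtain n :: "nat \<Rightarrow> int" where n: "strict_mono n" "range n = {s\<in>uminus ` S. - 1 < s}"
    using enumerate_int_above by blast
  define k where "k j = (if 0 < j then p (nat (j - 1)) else - n (nat (- j)))" for j
  have pS: "0 < p i" "p i \<in> S" and nS: "0 \<le> n i" "- n i \<in> S" for i
    using rangeI[of p i] rangeI[of n i] unfolding p(2) n(2) by auto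
  have "strict_mono k"
    unfolding k_def using p(1) n(1) pS(1) nS(1) by (rule strict_mono_glue)
  moreover have "S \<subseteq> range k"
  proof
    fix s assume s: "s \<in> S"
    show "s \<in> range k"
    proof (cases "0 < s")
      case True
      then have "s \<in> range p" using s p(2) by simp
      then obtain i where "p i = s" by (metis rangeE)
      then have "k (int i + 1) = s" unfolding k_def by simp
      then show ?thesis by (metis rangeI)
    next
      case False
      then have "- s \<in> range n" using s n(2) by auto
      then obtain i where "n i = - s" by (metis rangeE)
      then have "k (- int i) = s" unfolding k_def by simp
      then show ?thesis by (metis rangeI)
    qed
  qed
  moreover have "range k \<subseteq> S" "k 0 \<le> 0" "0 < k 1" unfolding k_def using pS nS by auto
  ultimately show ?thesis unfolding enumerates_def by blast
qed

lemma ex_enumerates_iff_unbounded: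
  "(\<exists>k. enumerates k S) \<longleftrightarrow> (\<forall>N. \<exists>s\<in>S. N \<le> s) \<and> (\<forall>N. \<exists>s\<in>S. s \<le> N)"
  using unbounded_if_enumerates enumerates_if_unbounded by blast

lemma enum_points_0_iff:
  assumes "\<exists>k. enumerates k S"
  shows "enum_points S 0 = v \<longleftrightarrow> v \<in> S \<and> v \<le> 0 \<and> (\<forall>w. v < w \<and> w \<le> 0 \<longrightarrow> w \<notin> S)"
proof -
  have e: "enumerates (enum_points S) S" by (rule enumerates_enum_points[OF assms])
  then have "enum_points S 0 \<in> S" "enum_points S 0 \<le> 0" unfolding enumerates_def by auto
  then show ?thesis using enumerates_0_greatest[OF e] by force
qed

lemma enum_points_succ_iff:
  assumes "\<exists>k. enumerates k S"
  shows "enum_points S (j + 1) = v \<longleftrightarrow> consecutive_in S (enum_points S j) v"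
  using enumerates_consecutive[OF enumerates_enum_points[OF assms], of "j + 1"]
    consecutive_in_unique_right by auto

lemma enum_points_pred_iff:
  assumes "\<exists>k. enumerates k S"
  shows "enum_points S (j - 1) = u \<longleftrightarrow> consecutive_in S u (enum_points S j)"
  using enumerates_consecutive[OF enumerates_enum_points[OF assms], of j]
    consecutive_in_unique_left by auto

lemma pred_enum_points_eq:
  assumes [measurable]: "\<And>n. Measurable.pred N (\<lambda>\<omega>. n \<in> \<Phi> \<omega>)"
    and [measurable]: "Measurable.pred N (\<lambda>\<omega>. \<exists>k. enumerates k (\<Phi> \<omega>))"
  shows "Measurable.pred N (\<lambda>\<omega>. (\<exists>k. enumerates k (\<Phi> \<omega>)) \<and> enum_points (\<Phi> \<omega>) j = v)"
proof (induction j arbitrary: v rule: int_induct[where k = 0])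
  case base
  show ?case by (subst enum_points_0_iff[THEN conj_cong[OF refl]]) measurable
next
  case (step1 i)
  note step1.IH[measurable]
  have "(\<lambda>\<omega>. (\<exists>k. enumerates k (\<Phi> \<omega>)) \<and> enum_points (\<Phi> \<omega>) (i + 1) = v) =
      (\<lambda>\<omega>. \<exists>u. ((\<exists>k. enumerates k (\<Phi> \<omega>)) \<and> enum_points (\<Phi> \<omega>) i = u) \<and> consecutive_in (\<Phi> \<omega>) u v)"
    using enum_points_succ_iff by blast
  then show ?case unfolding consecutive_in_def by (simp only:) measurable
next
  case (step2 i)
  note step2.IH[measurable]
  have "(\<lambda>\<omega>. (\<exists>k. enumerates k (\<Phi> \<omega>)) \<and> enum_points (\<Phi> \<omega>) (i - 1) = v) =
      (\<lambda>\<omega>. \<exists>u. ((\<exists>k. enumerates k (\<Phi> \<omega>)) \<and> enum_points (\<Phi> \<omega>) i = u) \<and> consecutive_in (\<Phi> \<omega>) v u)"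
    using enum_points_pred_iff by blast
  then show ?case unfolding consecutive_in_def by (simp only:) measurable
qed

lemma measurable_enum_points:
  assumes [measurable]: "\<And>n. Measurable.pred N (\<lambda>\<omega>. n \<in> \<Phi> \<omega>)"
  shows "(\<lambda>\<omega>. enum_points (\<Phi> \<omega>) j) \<in> N \<rightarrow>\<^sub>M count_space UNIV"
proof -
  have [measurable]: "Measurable.pred N (\<lambda>\<omega>. \<exists>k. enumerates k (\<Phi> \<omega>))"
    unfolding ex_enumerates_iff_unbounded Bex_def by measurable
  note pred_enum_points_eq[measurable]
  have "(\<lambda>\<omega>. enum_points (\<Phi> \<omega>) j = v) = (\<lambda>\<omega>. ((\<exists>k. enumerates k (\<Phi> \<omega>)) \<and> enum_points (\<Phi> \<omega>) j = v) \<or>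
      (\<not> (\<exists>k. enumerates k (\<Phi> \<omega>)) \<and> v = 0))" for v
    using enum_points_default by fastforce
  then have "Measurable.pred N (\<lambda>\<omega>. enum_points (\<Phi> \<omega>) j = v)" for v by (simp only:) measurable
  then have "(\<lambda>\<omega>. enum_points (\<Phi> \<omega>) j) -` {v} \<inter> space N \<in> sets N" for v
    unfolding pred_def by (simp add: vimage_def Int_def conj_commute)
  then show ?thesis unfolding measurable_count_space_eq2_countable by simp
qed

lemma renewal_cycles_consecutive:
  fixes t :: "int \<Rightarrow> int" and lo hi j :: int
  assumes start: "renewal_time x (t (lo - 1))"
    and cycles: "\<And>j. lo \<le> j \<Longrightarrow> j \<le> hi \<Longrightarrow> renewal_cycle x (t (j - 1)) (t j)"
    and "lo \<le> j" "j \<le> hi"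
  shows "consecutive_in {n. renewal_time x n} (t (j - 1)) (t j)"
proof -
  have "j \<le> hi \<longrightarrow> renewal_time x (t (j - 1))"
    using \<open>lo \<le> j\<close>
  proof (induction j rule: int_ge_induct)
    case (step i)
    then show ?case using cycles[of i] renewal_cycle_iff[of x "t (i - 1)" "t i"]
      by (auto simp: consecutive_in_def)
  qed (use start in simp)
  then show ?thesis using cycles[OF assms(3,4)] renewal_cycle_iff \<open>j \<le> hi\<close> by blast
qed

lemma renewal_gaps_iff_cycles:
  fixes x :: "int \<Rightarrow> nat" and t :: "int \<Rightarrow> int"
  defines "S \<equiv> {n. renewal_time x n}"
  assumes enum: "0 \<in> S \<Longrightarrow> \<exists>k. enumerates k S" and "lo \<le> 0" "0 \<le> hi" and t0: "t 0 = 0"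
  shows "(0 \<in> S \<and> (\<forall>j\<in>{lo..hi}. enum_points S j - enum_points S (j - 1) = t j - t (j - 1))) \<longleftrightarrow>
         renewal_time x (t (lo - 1)) \<and> (\<forall>j\<in>{lo..hi}. renewal_cycle x (t (j - 1)) (t j))"
proof
  assume lhs: "0 \<in> S \<and> (\<forall>j\<in>{lo..hi}. enum_points S j - enum_points S (j - 1) = t j - t (j - 1))"
  then have k: "enumerates (enum_points S) S" using enum enumerates_enum_points by blast
  have "enum_points S 0 = t 0" using enum_points_0_iff[of S 0] lhs enum t0 by auto
  then have kt: "enum_points S j = t j" if "lo - 1 \<le> j" "j \<le> hi" for j
    using lhs that assms(3,4) by (intro differences_determine[of lo hi _ t j 0]) auto
  show "renewal_time x (t (lo - 1)) \<and> (\<forall>j\<in>{lo..hi}. renewal_cycle x (t (j - 1)) (t j))"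
  proof (intro conjI ballI)
    have "enum_points S j \<in> S" for j using k unfolding enumerates_def by blast
    moreover have "enum_points S (lo - 1) = t (lo - 1)" using kt assms(3,4) by simp
    ultimately have "t (lo - 1) \<in> S" by metis
    then show "renewal_time x (t (lo - 1))" unfolding S_def by simp
    fix j assume "j \<in> {lo..hi}"
    then have "consecutive_in S (t (j - 1)) (t j)"
      using enumerates_consecutive[OF k, of j] kt[of j] kt[of "j - 1"] by simp
    then show "renewal_cycle x (t (j - 1)) (t j)"
      using renewal_cycle_iff unfolding S_def consecutive_in_def by blast
  qed
next
  assume rhs: "renewal_time x (t (lo - 1)) \<and> (\<forall>j\<in>{lo..hi}. renewal_cycle x (t (j - 1)) (t j))"
  then have cons: "consecutive_in S (t (j - 1)) (t j)" if "lo \<le> j" "j \<le> hi" for j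
    unfolding S_def using that by (intro renewal_cycles_consecutive) auto
  then have "0 \<in> S" using cons[of 0] t0 assms(3,4) unfolding consecutive_in_def by simp
  then have k: "enumerates (enum_points S) S" using enum enumerates_enum_points by blast
  have "enum_points S 0 = t 0" using enum_points_0_iff[of S 0] \<open>0 \<in> S\<close> enum t0 by auto
  then have "enum_points S j = t j" if "lo - 1 \<le> j" "j \<le> hi" for j
    using that assms(3,4) enumerates_consecutive[OF k] cons
    by (intro consecutive_chains_agree[of lo hi S _ t j 0]) auto
  then show "0 \<in> S \<and> (\<forall>j\<in>{lo..hi}. enum_points S j - enum_points S (j - 1) = t j - t (j - 1))"
    using \<open>0 \<in> S\<close> by simp
qed

lemma disjoint_chain_blocks:
  fixes t :: "int \<Rightarrow> int"
  assumes incr: "\<And>j. lo \<le> j \<Longrightarrow> j \<le> hi \<Longrightarrow> t (j - 1) < t j"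
  shows "disjoint_family_on (\<lambda>j. if j = lo - 1 then {..< t (lo - 1)} else {t (j - 1)..< t j}) {lo - 1..hi}"
proof -
  have mono: "t i \<le> t j" if "lo - 1 \<le> i" "i \<le> j" "j \<le> hi" for i j
    using that(2,3)
  proof (induction j rule: int_ge_induct)
    case (step j)
    then show ?case using incr[of "j + 1"] that(1) by simp
  qed simp
  have "(if i = lo - 1 then {..< t (lo - 1)} else {t (i - 1)..< t i}) \<inter>
      (if j = lo - 1 then {..< t (lo - 1)} else {t (j - 1)..< t j}) = {}"
    if "lo - 1 \<le> i" "i < j" "j \<le> hi" for i j
    using mono[of i "j - 1"] that by (auto split: if_splits)
  then show ?thesis
    unfolding disjoint_family_on_def by (metis Int_commute atLeastAtMost_iff linorder_neqE)
qed

section \<open>Independent blocks, discrete independence and recurrence\<close>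

context prob_space
begin

lemma indep_vars_local_events:
  fixes X :: "'i \<Rightarrow> 'a \<Rightarrow> 'b" and P :: "'j \<Rightarrow> ('i \<Rightarrow> 'b) \<Rightarrow> bool"
  assumes indep: "indep_vars (\<lambda>_. count_space UNIV) X UNIV"
    and L: "finite L" "L \<noteq> {}" and disj: "disjoint_family_on K L"
    and P: "\<And>j. j \<in> L \<Longrightarrow> Measurable.pred (PiM UNIV (\<lambda>_. count_space UNIV)) (P j)"
    and local: "\<And>j x y. j \<in> L \<Longrightarrow> (\<And>i. i \<in> K j \<Longrightarrow> x i = y i) \<Longrightarrow> P j x \<longleftrightarrow> P j y"
  shows "prob {\<omega>\<in>space M. \<forall>j\<in>L. P j (\<lambda>i. X i \<omega>)} = (\<Prod>j\<in>L. prob {\<omega>\<in>space M. P j (\<lambda>i. X i \<omega>)})"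
proof -
  define Y where "Y j \<omega> = restrict (\<lambda>i. X i \<omega>) (K j)" for j \<omega>
  have Y: "indep_vars (\<lambda>j. PiM (K j) (\<lambda>_. count_space UNIV)) Y L"
    unfolding Y_def by (rule indep_vars_restrict[OF indep _ disj]) auto
  define pad where "pad j y = (\<lambda>i. if i \<in> K j then y i else undefined)" for j and y :: "'i \<Rightarrow> 'b"
  have [measurable]: "pad j \<in> PiM (K j) (\<lambda>_. count_space UNIV) \<rightarrow>\<^sub>M PiM UNIV (\<lambda>_. count_space UNIV)" for j
    unfolding pad_def
  proof (rule measurable_PiM_single')
    fix i show "(\<lambda>y. if i \<in> K j then y i else undefined) \<in> PiM (K j) (\<lambda>_. count_space UNIV) \<rightarrow>\<^sub>M count_space UNIV"
      by (cases "i \<in> K j") (simp_all add: measurable_component_singleton)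
  qed (auto simp: space_PiM)
  define Q where "Q j = {y\<in>space (PiM (K j) (\<lambda>_. count_space UNIV)). P j (pad j y)}" for j
  have Q: "Q j \<in> sets (PiM (K j) (\<lambda>_. count_space UNIV))" if "j \<in> L" for j
  proof -
    note P[OF that, measurable]
    show ?thesis unfolding Q_def by measurable
  qed
  have YQ: "Y j -` Q j \<inter> space M = {\<omega>\<in>space M. P j (\<lambda>i. X i \<omega>)}" if "j \<in> L" for j
  proof -
    have "P j (pad j (Y j \<omega>)) \<longleftrightarrow> P j (\<lambda>i. X i \<omega>)" for \<omega>
      by (rule local[OF that]) (simp add: pad_def Y_def)
    then show ?thesis by (auto simp: Q_def Y_def space_PiM)
  qed
  have "prob (\<Inter>j\<in>L. Y j -` Q j \<inter> space M) = (\<Prod>j\<in>L. prob (Y j -` Q j \<inter> space M))"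
    using Y L Q by (intro indep_varsD) auto
  moreover have "(\<Inter>j\<in>L. Y j -` Q j \<inter> space M) = {\<omega>\<in>space M. \<forall>j\<in>L. P j (\<lambda>i. X i \<omega>)}"
    using YQ L(2) by auto
  ultimately show ?thesis using YQ by simp
qed

lemma indep_vars_count_spaceI:
  fixes X :: "'i \<Rightarrow> 'a \<Rightarrow> 'b :: countable"
  assumes rv: "\<And>i. X i \<in> M \<rightarrow>\<^sub>M count_space UNIV"
    and prod: "\<And>J v. finite J \<Longrightarrow> J \<noteq> {} \<Longrightarrow>
      prob {\<omega>\<in>space M. \<forall>j\<in>J. X j \<omega> = v j} = (\<Prod>j\<in>J. prob {\<omega>\<in>space M. X j \<omega> = v j})"
  shows "indep_vars (\<lambda>_. count_space UNIV) X I"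
proof -
  define F where "F i = insert {} {X i -` {v} \<inter> space M | v. True}" for i
  have F_events: "F i \<subseteq> events" for i
    unfolding F_def using measurable_sets[OF rv] by auto
  have "indep_sets F I"
  proof (rule indep_setsI)
    fix A J assume J: "J \<noteq> {}" "finite J" and A: "\<forall>j\<in>J. A j \<in> F j"
    show "prob (\<Inter>j\<in>J. A j) = (\<Prod>j\<in>J. prob (A j))"
    proof (cases "\<exists>j\<in>J. A j = {}")
      case True
      then obtain j where "j \<in> J" "A j = {}" by blast
      then have "(\<Inter>j\<in>J. A j) = {}" "(\<Prod>j\<in>J. prob (A j)) = 0"
        using J(2) by (auto intro!: prod_zero bexI[of _ j])
      then show ?thesis by simp
    next
      case False
      then have "\<forall>j\<in>J. \<exists>v. A j = X j -` {v} \<inter> space M" using A unfolding F_def by blast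
      then obtain v where v: "\<And>j. j \<in> J \<Longrightarrow> A j = X j -` {v j} \<inter> space M" by metis
      then have "(\<Inter>j\<in>J. A j) = {\<omega>\<in>space M. \<forall>j\<in>J. X j \<omega> = v j}" using J(1) by auto
      then show ?thesis using prod[OF J(2,1), of v] v by (simp add: vimage_def Int_def conj_commute)
    qed
  qed (rule F_events)
  then have sigma: "indep_sets (\<lambda>i. sigma_sets (space M) (F i)) I"
    by (rule indep_sets_sigma) (auto simp: F_def Int_stable_def)
  have "{X i -` A \<inter> space M | A. A \<in> sets (count_space UNIV)} \<subseteq> sigma_sets (space M) (F i)" for i
  proof safe
    fix A :: "'b set"
    have "X i -` A \<inter> space M = (\<Union>v\<in>A. X i -` {v} \<inter> space M)" by auto
    also have "\<dots> \<in> sigma_sets (space M) (F i)"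
      by (intro sigma_sets_UNION countable_image countableI_type) (auto simp: F_def)
    finally show "X i -` A \<inter> space M \<in> sigma_sets (space M) (F i)" .
  qed
  then show ?thesis unfolding indep_vars_def2 using rv
    by (auto intro: indep_sets_mono_sets[OF sigma] simp del: sets_count_space)
qed

lemma AE_recurrent:
  fixes R :: "int \<Rightarrow> 'a \<Rightarrow> bool" and \<sigma> :: "int \<Rightarrow> 'a \<Rightarrow> 'a"
  assumes [measurable]: "\<And>N. \<sigma> N \<in> M \<rightarrow>\<^sub>M M" and preserving: "\<And>N. distr M M (\<sigma> N) = M"
    and [measurable]: "\<And>n. Measurable.pred M (R n)"
    and shift: "\<And>N n \<omega>. \<omega> \<in> space M \<Longrightarrow> R n (\<sigma> N \<omega>) \<longleftrightarrow> R (n + N) \<omega>"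
  shows "AE \<omega> in M. R 0 \<omega> \<longrightarrow> (\<forall>N. \<exists>n\<ge>N. R n \<omega>)"
proof -
  define H where "H N = {\<omega>\<in>space M. \<forall>n\<ge>N. \<not> R n \<omega>}" for N
  have H_sets [measurable]: "H N \<in> sets M" for N unfolding H_def by measurable
  have tail: "(\<forall>n\<ge>0. \<not> R (n + N) \<omega>) \<longleftrightarrow> (\<forall>m\<ge>N. \<not> R m \<omega>)" for N \<omega>
  proof (intro iffI allI impI)
    fix m assume "\<forall>n\<ge>0. \<not> R (n + N) \<omega>" "N \<le> m"
    then show "\<not> R m \<omega>" by (auto dest: spec[of _ "m - N"])
  qed auto
  have "\<sigma> N \<omega> \<in> H 0 \<longleftrightarrow> \<omega> \<in> H N" if "\<omega> \<in> space M" for N \<omega>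
    using that measurable_space[of "\<sigma> N" M M \<omega>] unfolding H_def by (simp add: shift tail)
  moreover have "H N \<subseteq> space M" for N unfolding H_def by blast
  ultimately have H_shift: "H N = \<sigma> N -` H 0 \<inter> space M" for N by blast
  have "prob (H N) = prob (H 0)" for N
  proof -
    have "prob (H N) = measure (distr M M (\<sigma> N)) (H 0)"
      unfolding H_shift[of N] by (rule measure_distr[symmetric]) measurable
    then show ?thesis by (simp only: preserving)
  qed
  then have "prob (H N - H 0) = 0" if "0 \<le> N" for N
    using that by (subst finite_measure_Diff) (auto simp: H_def)
  then have "H (int N) - H 0 \<in> null_sets M" for N
    by (intro null_setsI) (auto simp: emeasure_eq_measure)
  then have "AE \<omega> in M. \<forall>N. \<omega> \<notin> H (int N) - H 0"
    by (simp only: AE_all_countable) (blast intro: AE_not_in)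
  with AE_space show ?thesis
  proof eventually_elim
    case (elim \<omega>)
    show ?case
    proof (intro impI allI)
      fix N assume "R 0 \<omega>"
      then have "\<omega> \<notin> H 0" unfolding H_def by auto
      then have "\<omega> \<notin> H (int (nat N))" using elim(2) by blast
      then obtain n where "int (nat N) \<le> n" "R n \<omega>" using elim(1) unfolding H_def by auto
      moreover have "N \<le> int (nat N)" by simp
      ultimately show "\<exists>n\<ge>N. R n \<omega>" by (intro exI[of _ n]) simp
    qed
  qed
qed

end

section \<open>The alive-count process of i.i.d. lifetimes\<close>

abbreviation lifetime_space :: "(int \<Rightarrow> nat) measure" where
  "lifetime_space \<equiv> PiM UNIV (\<lambda>_. count_space UNIV)"

lemma pred_renewal_time [measurable]: "Measurable.pred lifetime_space (\<lambda>x. renewal_time x n)"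
  unfolding renewal_time_iff_lifetimes by measurable

lemma pred_finite_alive_set [measurable]: "Measurable.pred lifetime_space (\<lambda>x. finite (alive_set x n))"
  unfolding finite_alive_set_iff finite_nat_set_iff_bounded_le Ball_def mem_Collect_eq by measurable

lemma renewal_cycle_iff_nat:
  "renewal_cycle x u v \<longleftrightarrow> u < v \<and> (\<forall>m. u \<le> m \<and> m < v \<longrightarrow> x m \<le> nat (v - m)) \<and>
     (\<forall>w. u < w \<and> w < v \<longrightarrow> (\<exists>m. u \<le> m \<and> m < w \<and> nat (w - m) < x m))"
  unfolding renewal_cycle_def by (intro conj_cong all_cong imp_cong ex_cong refl) auto

lemma pred_renewal_cycle [measurable]: "Measurable.pred lifetime_space (\<lambda>x. renewal_cycle x u v)"
  unfolding renewal_cycle_iff_nat by measurable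

locale lifetime_model = prob_space M for M :: "'a measure" +
  fixes \<theta> :: "int \<Rightarrow> 'a \<Rightarrow> 'a" and a :: "int \<Rightarrow> 'a \<Rightarrow> nat"
  assumes flow: "is_flow M \<theta>"
    and indep: "indep_vars (\<lambda>_. count_space UNIV) a UNIV"
    and ident: "\<forall>n. distr M (count_space UNIV) (a n) = distr M (count_space UNIV) (a 0)"
    and compat: "\<forall>n. \<forall>\<omega>\<in>space M. a n \<omega> = a 0 (\<theta> n \<omega>)"
    and integrable_a: "integrable M (\<lambda>\<omega>. real (a 0 \<omega>))"
    and prob_a_1: "prob {\<omega> \<in> space M. a 0 \<omega> = 1} > 0"
begin

lemma measurable_a [measurable]: "a n \<in> M \<rightarrow>\<^sub>M count_space UNIV"
  using indep by (simp add: indep_vars_def)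

lemma measurable_flow [measurable]: "\<theta> n \<in> M \<rightarrow>\<^sub>M M"
  and flow_preserving: "distr M M (\<theta> n) = M"
  using flow by (simp_all add: is_flow_def)

lemma lifetimes_flow:
  assumes "\<omega> \<in> space M"
  shows "a m (\<theta> n \<omega>) = a (m + n) \<omega>"
proof -
  have "\<theta> n \<omega> \<in> space M" using measurable_space[OF measurable_flow] assms .
  then have "a m (\<theta> n \<omega>) = a 0 (\<theta> m (\<theta> n \<omega>))" using compat by blast
  also have "\<theta> m (\<theta> n \<omega>) = \<theta> (m + n) \<omega>" using flow assms unfolding is_flow_def by blast
  finally show ?thesis using compat assms by metis
qed

lemma measurable_lifetimes [measurable]: "(\<lambda>\<omega> m. a m \<omega>) \<in> M \<rightarrow>\<^sub>M lifetime_space"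
  by (rule measurable_PiM_single') (simp_all add: space_PiM)

lemma prob_flow_invariant:
  assumes [measurable]: "Measurable.pred M P"
  shows "prob {\<omega>\<in>space M. P (\<theta> n \<omega>)} = prob {\<omega>\<in>space M. P \<omega>}"
proof -
  have "prob {\<omega>\<in>space M. P (\<theta> n \<omega>)} = measure (distr M M (\<theta> n)) {\<omega>\<in>space M. P \<omega>}"
    by (subst measure_distr) (auto intro!: arg_cong[where f = prob] measurable_space[OF measurable_flow])
  then show ?thesis by (simp only: flow_preserving)
qed

lemma prob_lifetime: "prob {\<omega>\<in>space M. P (a k \<omega>)} = prob {\<omega>\<in>space M. P (a 0 \<omega>)}"
proof -
  have "prob {\<omega>\<in>space M. P (a j \<omega>)} = measure (distr M (count_space UNIV) (a j)) {x. P x}" for j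
    by (subst measure_distr) (auto intro!: arg_cong[where f = prob])
  then show ?thesis using ident by metis
qed

abbreviation renewal :: "int \<Rightarrow> 'a \<Rightarrow> bool" where
  "renewal n \<omega> \<equiv> renewal_time (\<lambda>m. a m \<omega>) n"

lemma renewal_flow: "\<omega> \<in> space M \<Longrightarrow> renewal n (\<theta> N \<omega>) \<longleftrightarrow> renewal (n + N) \<omega>"
  using renewal_time_shift[of "\<lambda>m. a m \<omega>" N n] by (simp add: lifetimes_flow)

definition Psi :: "'a \<Rightarrow> int set" where
  "Psi \<omega> = {m. alive_count a m \<omega> = 1}"

lemma pred_Psi [measurable]: "Measurable.pred M (\<lambda>\<omega>. n \<in> Psi \<omega>)"
  unfolding Psi_def mem_Collect_eq alive_count_eq_1_iff by measurable

lemma summable_tail_probs: "summable (\<lambda>i. prob {\<omega>\<in>space M. i < a 0 \<omega>})"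
proof (rule summableI_nonneg_bounded)
  fix N
  have [measurable]: "{\<omega>\<in>space M. i < a 0 \<omega>} \<in> sets M" for i by measurable
  have [intro]: "integrable M (indicator {\<omega>\<in>space M. i < a 0 \<omega>} :: 'a \<Rightarrow> real)" for i
    by (rule integrable_real_indicator) (auto simp: emeasure_eq_measure)
  have "(\<Sum>i<N. prob {\<omega>\<in>space M. i < a 0 \<omega>}) = expectation (\<lambda>\<omega>. \<Sum>i<N. indicator {\<omega>\<in>space M. i < a 0 \<omega>} \<omega>)"
    by (subst Bochner_Integration.integral_sum) (auto simp: Int_absorb2)
  also have "\<dots> \<le> expectation (\<lambda>\<omega>. real (a 0 \<omega>))"
  proof (rule integral_mono)
    fix \<omega> assume "\<omega> \<in> space M"
    then have "(\<Sum>i<N. indicator {\<omega>\<in>space M. i < a 0 \<omega>} \<omega> :: real) = card {i. i < N \<and> i < a 0 \<omega>}"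
      by (simp add: indicator_def sum.If_cases Int_def)
    also have "\<dots> \<le> real (a 0 \<omega>)" using card_mono[of "{..<a 0 \<omega>}" "{i. i < N \<and> i < a 0 \<omega>}"] by auto
    finally show "(\<Sum>i<N. indicator {\<omega>\<in>space M. i < a 0 \<omega>} \<omega> :: real) \<le> real (a 0 \<omega>)" .
  qed (auto intro: integrable_a)
  finally show "(\<Sum>i<N. prob {\<omega>\<in>space M. i < a 0 \<omega>}) \<le> expectation (\<lambda>\<omega>. real (a 0 \<omega>))" .
qed simp

lemma AE_finite_alive_set: "AE \<omega> in M. finite (alive_set (\<lambda>m. a m \<omega>) n)"
proof -
  define A where "A i = {\<omega>\<in>space M. Suc i < a (n - 1 - int i) \<omega>}" for i
  have [measurable]: "A i \<in> sets M" for i unfolding A_def by measurable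
  have "summable (\<lambda>i. prob (A i))"
    using summable_ignore_initial_segment[OF summable_tail_probs, of 1]
    unfolding A_def by (subst prob_lifetime) simp
  then have "AE \<omega> in M. eventually (\<lambda>i. \<omega> \<in> space M - A i) sequentially"
    by (intro borel_cantelli_AE1) (auto simp: emeasure_eq_measure)
  with AE_space show ?thesis
    by eventually_elim
      (auto simp: finite_alive_set_iff A_def cofinite_eq_sequentially[symmetric] eventually_cofinite)
qed

lemma AE_Psi_eq: "AE \<omega> in M. Psi \<omega> = {n. renewal n \<omega>}"
proof -
  have "AE \<omega> in M. \<forall>n. finite (alive_set (\<lambda>m. a m \<omega>) n)"
    using AE_finite_alive_set by (simp add: AE_all_countable)
  then show ?thesis
    by eventually_elim (simp only: Psi_def alive_count_eq_1_iff, blast)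
qed

definition renewal_prob :: real where
  "renewal_prob = prob {\<omega>\<in>space M. renewal 0 \<omega>}"

lemma prob_renewal: "prob {\<omega>\<in>space M. renewal n \<omega>} = renewal_prob"
proof -
  have "prob {\<omega>\<in>space M. renewal n \<omega>} = prob {\<omega>\<in>space M. renewal 0 (\<theta> n \<omega>)}"
    by (auto simp: renewal_flow intro!: arg_cong[where f = prob])
  also have "\<dots> = renewal_prob" unfolding renewal_prob_def by (rule prob_flow_invariant) measurable
  finally show ?thesis .
qed

lemma renewal_prob_limit: "(\<lambda>N. \<Prod>i\<le>N. prob {\<omega>\<in>space M. a 0 \<omega> \<le> Suc i}) \<longlonglongrightarrow> renewal_prob"
proof -
  define W where "W N = {\<omega>\<in>space M. \<forall>i\<le>N. a (- 1 - int i) \<omega> \<le> Suc i}" for N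
  have [measurable]: "W N \<in> sets M" for N unfolding W_def by measurable
  have "prob (W N) = (\<Prod>i\<le>N. prob {\<omega>\<in>space M. a 0 \<omega> \<le> Suc i})" for N
  proof -
    define g where "g i = - 1 - int i" for i
    have g: "inj_on g {..N}" by (simp add: g_def inj_on_def)
    have "W N = (\<Inter>j\<in>g ` {..N}. a j -` {..Suc (nat (- 1 - j))} \<inter> space M)"
      unfolding W_def g_def by auto
    also have "prob \<dots> = (\<Prod>j\<in>g ` {..N}. prob (a j -` {..Suc (nat (- 1 - j))} \<inter> space M))"
      by (rule indep_varsD[OF indep]) auto
    also have "\<dots> = (\<Prod>i\<le>N. prob {\<omega>\<in>space M. a (g i) \<omega> \<le> Suc i})"
      unfolding prod.reindex[OF g] by (simp add: g_def vimage_def Int_def conj_commute)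
    also have "\<dots> = (\<Prod>i\<le>N. prob {\<omega>\<in>space M. a 0 \<omega> \<le> Suc i})"
      by (rule prod.cong[OF refl]) (rule prob_lifetime)
    finally show ?thesis .
  qed
  moreover have "(\<lambda>N. prob (W N)) \<longlonglongrightarrow> prob (\<Inter>N. W N)"
    by (rule finite_Lim_measure_decseq) (auto simp: decseq_def W_def)
  moreover have "(\<Inter>N. W N) = {\<omega>\<in>space M. renewal 0 \<omega>}"
    unfolding W_def renewal_time_iff_lifetimes by auto
  ultimately show ?thesis unfolding renewal_prob_def by simp
qed

text \<open>The factors are positive as P[a 0 = 1] > 0, and \<open>1 - P[a 0 \<le> i + 1] = P[a 0 > i + 1]\<close> is
  summable since a 0 is integrable, so the product converges to a nonzero limit.\<close>
lemma renewal_prob_pos: "renewal_prob > 0"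
proof -
  define f where "f i = prob {\<omega>\<in>space M. a 0 \<omega> \<le> Suc i}" for i
  have f_pos: "f i > 0" for i
    using prob_a_1 finite_measure_mono[of "{\<omega>\<in>space M. a 0 \<omega> = 1}" "{\<omega>\<in>space M. a 0 \<omega> \<le> Suc i}"]
    unfolding f_def by fastforce
  have "norm (f i - 1) = prob {\<omega>\<in>space M. Suc i < a 0 \<omega>}" for i
  proof -
    have "prob {\<omega>\<in>space M. Suc i < a 0 \<omega>} = prob (space M - {\<omega>\<in>space M. a 0 \<omega> \<le> Suc i})"
      by (rule arg_cong[where f = prob]) auto
    also have "\<dots> = 1 - f i" unfolding f_def by (rule prob_compl) measurable
    finally show ?thesis by (simp add: f_def)
  qed
  then have "summable (\<lambda>i. norm (f i - 1))"
    using summable_ignore_initial_segment[OF summable_tail_probs, of 1] by simp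
  then have "convergent_prod f"
    by (intro abs_convergent_prod_imp_convergent_prod summable_imp_abs_convergent_prod)
  then obtain L where "(\<lambda>n. \<Prod>i\<le>n. f i) \<longlonglongrightarrow> L" "L \<noteq> 0"
    using convergent_prod_iff_nz_lim[of f] f_pos by (metis less_irrefl)
  moreover have "L = renewal_prob" using LIMSEQ_unique[OF calculation(1) renewal_prob_limit[folded f_def]] .
  ultimately show ?thesis using measure_nonneg[of M] unfolding renewal_prob_def by (metis order_le_less)
qed

lemma renewal_prob_has_prod: "(\<lambda>i. prob {\<omega>\<in>space M. a 0 \<omega> \<le> Suc i}) has_prod renewal_prob"
  unfolding has_prod_def raw_has_prod_def using renewal_prob_limit renewal_prob_pos by simp

lemma AE_renewals_unbounded:
  "AE \<omega> in M. renewal 0 \<omega> \<longrightarrow> (\<forall>N. \<exists>n\<ge>N. renewal n \<omega>) \<and> (\<forall>N. \<exists>n\<le>N. renewal n \<omega>)"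
proof -
  have "AE \<omega> in M. renewal 0 \<omega> \<longrightarrow> (\<forall>N. \<exists>n\<ge>N. renewal n \<omega>)"
    by (rule AE_recurrent[of \<theta>]) (simp_all add: flow_preserving renewal_flow)
  moreover have "AE \<omega> in M. renewal (- 0) \<omega> \<longrightarrow> (\<forall>N. \<exists>n\<ge>N. renewal (- n) \<omega>)"
    by (rule AE_recurrent[of "\<lambda>N. \<theta> (- N)" "\<lambda>n. renewal (- n)"]) (simp_all add: flow_preserving renewal_flow)
  ultimately show ?thesis
  proof eventually_elim
    case (elim \<omega>)
    have "\<exists>n\<le>N. renewal n \<omega>" if r0: "renewal 0 \<omega>" for N
    proof -
      obtain n where "- N \<le> n" "renewal (- n) \<omega>" using elim(2) r0 by auto
      then show ?thesis by (intro exI[of _ "- n"]) auto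
    qed
    then show ?case using elim(1) by blast
  qed
qed

lemma indep_no_renewal_below:
  "prob {\<omega>\<in>space M. (\<exists>N. \<forall>n\<le>N. \<not> renewal n \<omega>) \<and> (\<forall>i<K. a (- 1 - int i) \<omega> \<le> Suc i)} =
    prob {\<omega>\<in>space M. \<exists>N. \<forall>n\<le>N. \<not> renewal n \<omega>} * prob {\<omega>\<in>space M. \<forall>i<K. a (- 1 - int i) \<omega> \<le> Suc i}"
proof -
  define P where "P b x = (if b then \<exists>N. \<forall>n\<le>N. \<not> renewal_time x n else \<forall>i<K. x (- 1 - int i) \<le> Suc i)"
    for b x
  define B where "B b = (if b then {..< - int K} else {- int K..<0})" for b
  have "prob {\<omega>\<in>space M. \<forall>b\<in>UNIV. P b (\<lambda>m. a m \<omega>)} = (\<Prod>b\<in>UNIV. prob {\<omega>\<in>space M. P b (\<lambda>m. a m \<omega>)})"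
  proof (rule indep_vars_local_events[OF indep, where K = B])
    show "disjoint_family_on B UNIV" unfolding disjoint_family_on_def B_def by auto
    show "Measurable.pred lifetime_space (P b)" for b unfolding P_def by (cases b) simp_all
  next
    fix b and x y :: "int \<Rightarrow> nat" assume "\<And>i. i \<in> B b \<Longrightarrow> x i = y i"
    then show "P b x \<longleftrightarrow> P b y"
      by (cases b) (auto simp: P_def B_def intro!: no_renewal_below_cong)
  qed auto
  moreover have "{\<omega>\<in>space M. \<forall>b\<in>UNIV. P b (\<lambda>m. a m \<omega>)} =
      {\<omega>\<in>space M. (\<exists>N. \<forall>n\<le>N. \<not> renewal n \<omega>) \<and> (\<forall>i<K. a (- 1 - int i) \<omega> \<le> Suc i)}"
    unfolding P_def by (auto simp: UNIV_bool)
  ultimately show ?thesis by (simp add: UNIV_bool P_def mult.commute)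
qed

text \<open>Having no renewal below some level is independent of the lifetimes in [-K, 0); as K grows
  these force a renewal at 0, which has positive probability but almost surely excludes the former.\<close>
lemma AE_renewal_exists: "AE \<omega> in M. \<exists>n. renewal n \<omega>"
proof -
  define E where "E = {\<omega>\<in>space M. \<exists>N. \<forall>n\<le>N. \<not> renewal n \<omega>}"
  define C where "C K = {\<omega>\<in>space M. \<forall>i<K. a (- 1 - int i) \<omega> \<le> Suc i}" for K
  have [measurable]: "E \<in> sets M" "C K \<in> sets M" for K unfolding E_def C_def by measurable
  have "E \<inter> C K = {\<omega>\<in>space M. (\<exists>N. \<forall>n\<le>N. \<not> renewal n \<omega>) \<and> (\<forall>i<K. a (- 1 - int i) \<omega> \<le> Suc i)}" for K
    unfolding E_def C_def by blast
  then have factor: "prob (E \<inter> C K) = prob E * prob (C K)" for K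
    using indep_no_renewal_below[of K] unfolding E_def C_def by simp
  have "(\<lambda>K. prob (E \<inter> C K)) \<longlonglongrightarrow> prob (\<Inter>K. E \<inter> C K)"
    by (rule finite_Lim_measure_decseq) (auto simp: decseq_def C_def)
  also have "(\<Inter>K. E \<inter> C K) = E \<inter> {\<omega>\<in>space M. renewal 0 \<omega>}"
    unfolding C_def renewal_time_iff_lifetimes by auto
  also have "prob \<dots> = prob {}"
    by (rule measure_eq_AE) (use AE_renewals_unbounded in \<open>auto simp: E_def elim!: eventually_mono\<close>)
  finally have "(\<lambda>K. prob E * prob (C K)) \<longlonglongrightarrow> 0" by (simp add: factor)
  moreover have "prob E * renewal_prob \<le> prob E * prob (C K)" for K
    unfolding renewal_prob_def C_def renewal_time_iff_lifetimes
    by (intro mult_left_mono finite_measure_mono) auto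
  ultimately have "prob E * renewal_prob \<le> 0" by (intro LIMSEQ_le_const) auto
  then have "E \<in> null_sets M"
    using renewal_prob_pos measure_nonneg[of M E] by (auto simp: null_sets_def emeasure_eq_measure mult_le_0_iff)
  with AE_space show ?thesis by (rule eventually_mono[OF AE_conjI[OF _ AE_not_in]]) (auto simp: E_def)
qed

section \<open>The Palm distribution of the gaps\<close>

definition cycle_prob :: "int \<Rightarrow> real" where
  "cycle_prob d = prob {\<omega>\<in>space M. renewal_cycle (\<lambda>m. a m \<omega>) 0 d}"

lemma prob_renewal_cycle: "prob {\<omega>\<in>space M. renewal_cycle (\<lambda>m. a m \<omega>) u v} = cycle_prob (v - u)"
proof -
  have "renewal_cycle (\<lambda>m. a m (\<theta> u \<omega>)) 0 (v - u) \<longleftrightarrow> renewal_cycle (\<lambda>m. a m \<omega>) u v"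
    if "\<omega> \<in> space M" for \<omega>
    using renewal_cycle_shift[of "\<lambda>m. a m \<omega>" u 0 "v - u"] by (simp add: lifetimes_flow[OF that])
  then have "prob {\<omega>\<in>space M. renewal_cycle (\<lambda>m. a m \<omega>) u v} =
      prob {\<omega>\<in>space M. renewal_cycle (\<lambda>m. a m (\<theta> u \<omega>)) 0 (v - u)}"
    by metis
  also have "\<dots> = cycle_prob (v - u)" unfolding cycle_prob_def by (rule prob_flow_invariant) measurable
  finally show ?thesis .
qed

lemma prob_renewal_chain:
  fixes t :: "int \<Rightarrow> int"
  assumes "lo \<le> hi"
  shows "prob {\<omega>\<in>space M. renewal (t (lo - 1)) \<omega> \<and> (\<forall>j\<in>{lo..hi}. renewal_cycle (\<lambda>m. a m \<omega>) (t (j - 1)) (t j))}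
    = renewal_prob * (\<Prod>j\<in>{lo..hi}. cycle_prob (t j - t (j - 1)))"
proof (cases "\<forall>j\<in>{lo..hi}. t (j - 1) < t j")
  case False
  then obtain j where j: "j \<in> {lo..hi}" "t j \<le> t (j - 1)" by auto
  then have "cycle_prob (t j - t (j - 1)) = 0" unfolding cycle_prob_def renewal_cycle_def by simp
  then have prod_0: "(\<Prod>j\<in>{lo..hi}. cycle_prob (t j - t (j - 1))) = 0"
    using j by (intro prod_zero) auto
  have "\<not> renewal_cycle x (t (j - 1)) (t j)" for x using j unfolding renewal_cycle_def by simp
  then have "{\<omega>\<in>space M. renewal (t (lo - 1)) \<omega> \<and>
      (\<forall>j\<in>{lo..hi}. renewal_cycle (\<lambda>m. a m \<omega>) (t (j - 1)) (t j))} = {}"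
    using j by blast
  then show ?thesis unfolding prod_0 by (simp only: measure_empty mult_zero_right)
next
  case True
  define L where "L = {lo - 1..hi}"
  define B where "B j = (if j = lo - 1 then {..< t (lo - 1)} else {t (j - 1)..< t j})" for j
  define P where "P j x = (if j = lo - 1 then renewal_time x (t (lo - 1)) else renewal_cycle x (t (j - 1)) (t j))"
    for j x
  have disj: "disjoint_family_on B L"
    unfolding B_def L_def using True by (intro disjoint_chain_blocks) auto
  have "prob {\<omega>\<in>space M. \<forall>j\<in>L. P j (\<lambda>m. a m \<omega>)} = (\<Prod>j\<in>L. prob {\<omega>\<in>space M. P j (\<lambda>m. a m \<omega>)})"
  proof (rule indep_vars_local_events[OF indep _ _ disj])
    show "finite L" "L \<noteq> {}" unfolding L_def using assms by auto
    show "Measurable.pred lifetime_space (P j)" for j unfolding P_def by (cases "j = lo - 1") simp_all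
  next
    fix j and x y :: "int \<Rightarrow> nat" assume "\<And>i. i \<in> B j \<Longrightarrow> x i = y i"
    then show "P j x \<longleftrightarrow> P j y"
      unfolding P_def B_def by (cases "j = lo - 1") (auto intro!: renewal_time_cong renewal_cycle_cong)
  qed
  moreover have L: "L = insert (lo - 1) {lo..hi}" "lo - 1 \<notin> {lo..hi}" unfolding L_def using assms by auto
  moreover have "{\<omega>\<in>space M. \<forall>j\<in>L. P j (\<lambda>m. a m \<omega>)} = {\<omega>\<in>space M. renewal (t (lo - 1)) \<omega> \<and>
      (\<forall>j\<in>{lo..hi}. renewal_cycle (\<lambda>m. a m \<omega>) (t (j - 1)) (t j))}"
    unfolding L P_def by auto
  moreover have "prob {\<omega>\<in>space M. P (lo - 1) (\<lambda>m. a m \<omega>)} = renewal_prob"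
    by (simp add: P_def prob_renewal)
  moreover have "(\<Prod>j\<in>{lo..hi}. prob {\<omega>\<in>space M. P j (\<lambda>m. a m \<omega>)}) =
      (\<Prod>j\<in>{lo..hi}. cycle_prob (t j - t (j - 1)))"
    by (rule prod.cong) (auto simp: P_def prob_renewal_cycle)
  ultimately show ?thesis by simp
qed

lemma alive_count_flow: "\<omega> \<in> space M \<Longrightarrow> alive_count a m (\<theta> n \<omega>) = alive_count a (m + n) \<omega>"
  using card_alive_set_shift[of "\<lambda>m. a m \<omega>" n m]
  by (simp add: alive_count_def alive_set_def lifetimes_flow)

lemma prob_0_in_Psi: "prob {\<omega>\<in>space M. 0 \<in> Psi \<omega>} = renewal_prob"
  unfolding renewal_prob_def by (rule measure_eq_AE) (use AE_Psi_eq in \<open>auto elim: eventually_mono\<close>)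

lemma AE_Psi_enumerable: "AE \<omega> in M. Psi \<omega> = {n. renewal n \<omega>} \<and> (0 \<in> Psi \<omega> \<longrightarrow> (\<exists>k. enumerates k (Psi \<omega>)))"
  using AE_Psi_eq AE_renewals_unbounded
  by eventually_elim (auto simp: ex_enumerates_iff_unbounded)

definition gap :: "int \<Rightarrow> 'a \<Rightarrow> int" where
  "gap j \<omega> = enum_points (Psi \<omega>) j - enum_points (Psi \<omega>) (j - 1)"

lemma measurable_gap [measurable]: "gap j \<in> M \<rightarrow>\<^sub>M count_space UNIV"
proof -
  note measurable_enum_points[OF pred_Psi, measurable]
  show ?thesis unfolding gap_def by measurable
qed

lemma AE_gap_pos: "AE \<omega> in M. 0 \<in> Psi \<omega> \<longrightarrow> (\<forall>j. 0 < gap j \<omega>)"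
  using AE_Psi_enumerable
proof eventually_elim
  case (elim \<omega>)
  show ?case
  proof
    assume "0 \<in> Psi \<omega>"
    then have "strict_mono (enum_points (Psi \<omega>))"
      using elim enumerates_enum_points unfolding enumerates_def by blast
    then show "\<forall>j. 0 < gap j \<omega>" by (simp add: gap_def strict_mono_less)
  qed
qed

definition palm_event :: "int set \<Rightarrow> (int \<Rightarrow> int) \<Rightarrow> 'a set" where
  "palm_event J d = {\<omega>\<in>space M. 0 \<in> Psi \<omega> \<and> (\<forall>j\<in>J. gap j \<omega> = d j)}"

lemma palm_event_sets [measurable]: "finite J \<Longrightarrow> palm_event J d \<in> sets M"
  unfolding palm_event_def by measurable

lemma prob_palm_event_interval:
  assumes "lo \<le> 0" "0 \<le> hi"
  shows "prob (palm_event {lo..hi} d) = renewal_prob * (\<Prod>j\<in>{lo..hi}. cycle_prob (d j))"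
proof -
  obtain t :: "int \<Rightarrow> int" where t0: "t 0 = 0" and td: "\<And>j. t j - t (j - 1) = d j"
    using ex_antidifference by blast
  have "prob (palm_event {lo..hi} d) = prob {\<omega>\<in>space M. renewal (t (lo - 1)) \<omega> \<and>
      (\<forall>j\<in>{lo..hi}. renewal_cycle (\<lambda>m. a m \<omega>) (t (j - 1)) (t j))}"
  proof (rule measure_eq_AE)
    show "AE \<omega> in M. \<omega> \<in> palm_event {lo..hi} d \<longleftrightarrow> \<omega> \<in> {\<omega>\<in>space M. renewal (t (lo - 1)) \<omega> \<and>
      (\<forall>j\<in>{lo..hi}. renewal_cycle (\<lambda>m. a m \<omega>) (t (j - 1)) (t j))}"
      using AE_Psi_enumerable
    proof eventually_elim
      case (elim \<omega>)
      have "(0 \<in> Psi \<omega> \<and> (\<forall>j\<in>{lo..hi}. gap j \<omega> = t j - t (j - 1))) \<longleftrightarrow>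
          renewal (t (lo - 1)) \<omega> \<and> (\<forall>j\<in>{lo..hi}. renewal_cycle (\<lambda>m. a m \<omega>) (t (j - 1)) (t j))"
        unfolding gap_def elim[THEN conjunct1]
        by (rule renewal_gaps_iff_cycles) (use elim assms t0 in auto)
      then show ?case unfolding palm_event_def td by auto
    qed
  qed measurable
  also have "\<dots> = renewal_prob * (\<Prod>j\<in>{lo..hi}. cycle_prob (d j))"
    using prob_renewal_chain[of lo hi t] assms by (simp add: td)
  finally show ?thesis .
qed

lemma summable_cycle_prob: "summable (\<lambda>i. cycle_prob (int (Suc i)))"
proof -
  define C where "C i = {\<omega>\<in>space M. renewal_cycle (\<lambda>m. a m \<omega>) 0 (int (Suc i))}" for i
  have "disjoint_family C"
    unfolding disjoint_family_on_def C_def using renewal_cycle_unique by fastforce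
  moreover have "C i \<in> sets M" for i unfolding C_def by measurable
  ultimately have "(\<lambda>i. prob (C i)) sums prob (\<Union>i. C i)"
    by (intro finite_measure_UNION) auto
  then show ?thesis unfolding C_def cycle_prob_def by (rule sums_summable)
qed

lemma palm_event_sums:
  assumes "finite J" "k \<notin> J"
  shows "(\<lambda>i. prob (palm_event (insert k J) (d(k := int (Suc i))))) sums prob (palm_event J d)"
proof -
  define E where "E i = palm_event (insert k J) (d(k := int (Suc i)))" for i
  have "disjoint_family E" unfolding disjoint_family_on_def E_def palm_event_def by auto
  moreover have "E i \<in> sets M" for i unfolding E_def using assms(1) by simp
  ultimately have "(\<lambda>i. prob (E i)) sums prob (\<Union>i. E i)"
    by (intro finite_measure_UNION) auto
  moreover have "prob (\<Union>i. E i) = prob (palm_event J d)"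
  proof (rule measure_eq_AE)
    show "AE \<omega> in M. \<omega> \<in> (\<Union>i. E i) \<longleftrightarrow> \<omega> \<in> palm_event J d"
      using AE_gap_pos
    proof eventually_elim
      case (elim \<omega>)
      show ?case
      proof
        assume "\<omega> \<in> palm_event J d"
        moreover from this have "gap k \<omega> = int (Suc (nat (gap k \<omega> - 1)))"
          using elim unfolding palm_event_def by auto
        ultimately have "\<omega> \<in> E (nat (gap k \<omega> - 1))"
          using assms(2) unfolding E_def palm_event_def by auto
        then show "\<omega> \<in> (\<Union>i. E i)" by blast
      qed (use assms(2) in \<open>auto simp: E_def palm_event_def\<close>)
    qed
  qed (use assms(1) in \<open>auto simp: E_def\<close>)
  ultimately show ?thesis unfolding E_def by simp
qed

lemma prob_palm_event_marginal:
  assumes "lo \<le> 0" "0 \<le> hi" "J \<subseteq> {lo..hi}"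
  shows "prob (palm_event J d) =
    renewal_prob * (\<Prod>j\<in>J. cycle_prob (d j)) * (\<Sum>i. cycle_prob (int (Suc i))) ^ card ({lo..hi} - J)"
  using assms(3)
proof (induction "card ({lo..hi} - J)" arbitrary: J d)
  case 0
  then have "J = {lo..hi}" by auto
  then show ?case using prob_palm_event_interval[OF assms(1,2)] by simp
next
  case (Suc n)
  then obtain k where k: "k \<in> {lo..hi}" "k \<notin> J" by (metis Diff_eq_empty_iff card.empty nat.simps(3) subsetI)
  have J: "finite J" using Suc.prems finite_subset by blast
  have "card ({lo..hi} - insert k J) = n" using Suc.hyps(2) k by (simp add: Diff_insert2[symmetric])
  moreover have "(\<Prod>j\<in>insert k J. cycle_prob ((d(k := int (Suc i))) j)) =
      cycle_prob (int (Suc i)) * (\<Prod>j\<in>J. cycle_prob (d j))" for i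
    using k J by (auto intro!: prod.cong)
  ultimately have "prob (palm_event (insert k J) (d(k := int (Suc i)))) =
      (renewal_prob * (\<Prod>j\<in>J. cycle_prob (d j)) * (\<Sum>i. cycle_prob (int (Suc i))) ^ n) * cycle_prob (int (Suc i))"
    for i
    using Suc.hyps(1)[of "insert k J"] Suc.prems k by (simp add: mult_ac)
  then have "(\<lambda>i. (renewal_prob * (\<Prod>j\<in>J. cycle_prob (d j)) * (\<Sum>i. cycle_prob (int (Suc i))) ^ n) *
      cycle_prob (int (Suc i))) sums prob (palm_event J d)"
    using palm_event_sums[OF J k(2), of d] by simp
  moreover have "(\<lambda>i. (renewal_prob * (\<Prod>j\<in>J. cycle_prob (d j)) * (\<Sum>i. cycle_prob (int (Suc i))) ^ n) *
      cycle_prob (int (Suc i))) sums ((renewal_prob * (\<Prod>j\<in>J. cycle_prob (d j)) * (\<Sum>i. cycle_prob (int (Suc i))) ^ n) *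
      (\<Sum>i. cycle_prob (int (Suc i))))"
    by (intro sums_mult summable_sums summable_cycle_prob)
  ultimately have "prob (palm_event J d) = (renewal_prob * (\<Prod>j\<in>J. cycle_prob (d j)) *
      (\<Sum>i. cycle_prob (int (Suc i))) ^ n) * (\<Sum>i. cycle_prob (int (Suc i)))"
    by (rule sums_unique2)
  then show ?case by (simp add: Suc.hyps(2)[symmetric] mult_ac)
qed

lemma sum_cycle_prob: "(\<Sum>i. cycle_prob (int (Suc i))) = 1"
proof -
  have "renewal_prob = renewal_prob * (\<Sum>i. cycle_prob (int (Suc i)))"
    using prob_palm_event_marginal[of 0 0 "{}"] prob_0_in_Psi by (simp add: palm_event_def)
  then show ?thesis using renewal_prob_pos by simp
qed

lemma prob_palm_event:
  assumes "finite J"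
  shows "prob (palm_event J d) = renewal_prob * (\<Prod>j\<in>J. cycle_prob (d j))"
proof -
  define B where "B = Max (insert 0 (abs ` J))"
  have B: "0 \<le> B" using assms unfolding B_def by (simp add: Max_ge_iff)
  have "\<bar>j\<bar> \<le> B" if "j \<in> J" for j using assms that unfolding B_def by (simp add: Max_ge_iff)
  then have "J \<subseteq> {- B..B}" by (force simp: abs_le_iff)
  then show ?thesis using prob_palm_event_marginal[of "- B" B J d] B unfolding sum_cycle_prob by simp
qed


lemma intensity_Psi: "intensity M Psi = renewal_prob"
  unfolding intensity_def by (rule prob_0_in_Psi)

lemma sspp_Psi: "sspp M \<theta> Psi"
  unfolding sspp_def
proof (intro conjI allI ballI)
  show "{\<omega> \<in> space M. n \<in> Psi \<omega>} \<in> sets M" for n by measurable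
  show "n \<in> Psi \<omega> \<longleftrightarrow> 0 \<in> Psi (\<theta> n \<omega>)" if "\<omega> \<in> space M" for \<omega> n
    using alive_count_flow[OF that, of 0 n] by (simp add: Psi_def)
  show "AE \<omega> in M. Psi \<omega> \<noteq> {}"
    using AE_renewal_exists AE_Psi_eq by eventually_elim auto
qed

lemma sets_palm [measurable_cong]: "sets (palm M Psi) = sets M"
  and space_palm [simp]: "space (palm M Psi) = space M"
  by (simp_all add: palm_def)

lemma prob_space_palm: "prob_space (palm M Psi)"
  unfolding palm_def using prob_0_in_Psi renewal_prob_pos
  by (intro prob_space_uniform_measure) (simp_all add: emeasure_eq_measure)

lemma measure_palm_gaps:
  assumes "finite J"
  shows "measure (palm M Psi) {\<omega>\<in>space M. \<forall>j\<in>J. gap j \<omega> = v j} = (\<Prod>j\<in>J. cycle_prob (v j))"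
proof -
  have "{\<omega>\<in>space M. 0 \<in> Psi \<omega>} \<inter> {\<omega>\<in>space M. \<forall>j\<in>J. gap j \<omega> = v j} = palm_event J v"
    unfolding palm_event_def by auto
  moreover have "{\<omega>\<in>space M. \<forall>j\<in>J. gap j \<omega> = v j} \<in> sets M" using assms by measurable
  ultimately show ?thesis
    using prob_palm_event[OF assms] prob_0_in_Psi renewal_prob_pos
    unfolding palm_def by (subst measure_uniform_measure) (simp_all add: emeasure_eq_measure)
qed

lemma palm_gaps_indep: "prob_space.indep_vars (palm M Psi) (\<lambda>_. count_space UNIV) gap UNIV"
proof -
  interpret palm: prob_space "palm M Psi" by (rule prob_space_palm)
  show ?thesis
  proof (rule palm.indep_vars_count_spaceI)
    show "gap i \<in> palm M Psi \<rightarrow>\<^sub>M count_space UNIV" for i by measurable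
    fix J :: "int set" and v assume "finite J" "J \<noteq> {}"
    then show "palm.prob {\<omega>\<in>space (palm M Psi). \<forall>j\<in>J. gap j \<omega> = v j} =
        (\<Prod>j\<in>J. palm.prob {\<omega>\<in>space (palm M Psi). gap j \<omega> = v j})"
      using measure_palm_gaps[of J v] measure_palm_gaps[of "{_}" v] by simp
  qed
qed

lemma palm_gaps_identically_distributed:
  "distr (palm M Psi) (count_space UNIV) (gap n) = distr (palm M Psi) (count_space UNIV) (gap 0)"
proof -
  have "emeasure (distr (palm M Psi) (count_space UNIV) (gap j)) {v} = cycle_prob v" for j v
  proof -
    interpret palm: prob_space "palm M Psi" by (rule prob_space_palm)
    have "emeasure (distr (palm M Psi) (count_space UNIV) (gap j)) {v} = palm.prob (gap j -` {v} \<inter> space M)"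
      by (subst emeasure_distr) (auto simp: palm.emeasure_eq_measure)
    also have "gap j -` {v} \<inter> space M = {\<omega>\<in>space M. \<forall>i\<in>{j}. gap i \<omega> = v}" by auto
    finally show ?thesis using measure_palm_gaps[of "{j}" "\<lambda>_. v"] by simp
  qed
  then show ?thesis by (intro measure_eqI_countable) auto
qed

lemma renewal_pp_Psi: "renewal_pp M \<theta> Psi"
  unfolding renewal_pp_def Let_def gap_def[abs_def, symmetric] intensity_Psi
  using sspp_Psi renewal_prob_pos palm_gaps_indep palm_gaps_identically_distributed by blast

end

theorem mainTheorem1:
  fixes M :: "'a measure" and \<theta> :: "int \<Rightarrow> 'a \<Rightarrow> 'a" and a :: "int \<Rightarrow> 'a \<Rightarrow> nat"
  assumes "prob_space M"
    and "is_flow M \<theta>"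
    and "prob_space.indep_vars M (\<lambda>_. count_space UNIV) a UNIV"
    and "\<forall>n. distr M (count_space UNIV) (a n) = distr M (count_space UNIV) (a 0)"
    and "\<forall>n. \<forall>\<omega>\<in>space M. a n \<omega> \<ge> 1"
    and "\<forall>n. \<forall>\<omega>\<in>space M. a n \<omega> = a 0 (\<theta> n \<omega>)"
    and "integrable M (\<lambda>\<omega>. real (a 0 \<omega>))"
    and "measure M {\<omega> \<in> space M. a 0 \<omega> = 1} > 0"
  shows "renewal_pp M \<theta> (\<lambda>\<omega>. {m. alive_count a m \<omega> = 1}) \<and>
         (\<lambda>i. measure M {\<omega> \<in> space M. a 0 \<omega> \<le> Suc i})
            has_prod intensity M (\<lambda>\<omega>. {m. alive_count a m \<omega> = 1}) \<and>
         intensity M (\<lambda>\<omega>. {m. alive_count a m \<omega> = 1}) > 0"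
proof -
  interpret lifetime_model M \<theta> a
    using assms(1-4,6-8) by (intro lifetime_model.intro lifetime_model_axioms.intro)
  have "(\<lambda>\<omega>. {m. alive_count a m \<omega> = 1}) = Psi" by (simp add: Psi_def[abs_def])
  then show ?thesis using renewal_pp_Psi renewal_prob_has_prod renewal_prob_pos intensity_Psi by simp
qed

end
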